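(* Let $\mathbb{T}=\mathbb{R}/2\pi\mathbb{Z}$. For $j=1,\dots,m$ let $c_j\in C^\infty(\mathbb{T};\mathbb{C})$ and let $P_j(D_x)$ be a pseudo-differential operator on $\mathbb{T}^n$, $P_j(D_x)u(x)=\sum_{\xi\in\mathbb{Z}^n}e^{ix\cdot\xi}p_j(\xi)\widehat{u}(\xi)$, with $|p_j(\xi)|\le C|\xi|^{\nu_j}$ for all $\xi\in\mathbb{Z}^n$ (some $C>0$, $\nu_j\in\mathbb{R}$). Let $L_j=D_t+c_j(t)P_j(D_x)$ on $\mathbb{T}^{n+1}$, $L=L_1\circ\cdots\circ L_m$, and $\mathcal{M}_j(t,\xi)=c_j(t)p_j(\xi)$. Assume that for each $j$ there is a positive constant $\eta_j$ with $\operatorname{Im}\mathcal{M}_j(t,\xi)\ge-\eta_j$ for all $t\in\mathbb{T}$, $\xi\in\mathbb{Z}^n$. Suppose that for some $k\in\{1,\dots,m\}$ there is a singular solution $u_k$ of $L_k$, i.e. $u_k\in\mathcal{D}'(\mathbb{T}^{n+1})\setminus C^\infty(\mathbb{T}^{n+1})$ with $L_ku_k\in C^\infty(\mathbb{T}^{n+1})$, and distributions $u_{k+1},\dots,u_m\in\mathcal{D}'(\mathbb{T}^{n+1})$ satisfying $$u_{k+j}=L_{k+j+1}u_{k+j+1},\qquad j\in\{0,\dots,m-k-1\}.$$ Then $L$ is not globally hypoelliptic.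
   Context: $D_t=-i\partial_t$; $\widehat{u}(\xi)=(2\pi)^{-n}\int_{\mathbb{T}^n}e^{-ix\cdot\xi}u(x)\,dx$. An operator $\mathcal{P}$ on $\mathbb{T}^N$ is globally hypoelliptic if $u\in\mathcal{D}'(\mathbb{T}^N)$ and $\mathcal{P}u\in C^\infty(\mathbb{T}^N)$ imply $u\in C^\infty(\mathbb{T}^N)$. *)

theory Defs
  imports "HOL-Analysis.Analysis"
begin

text \<open>Distributions on the torus T^(n+1) = T_t x T^n_x are represented by their
Fourier coefficients, indexed by (tau, xi) in Z x Z^n, with the convention
u(t,x) = sum exp(i(t tau + x.xi)) uhat(tau,xi).\<close>

type_synonym ('n) coef = "int \<times> (int ^ 'n) \<Rightarrow> complex"

definition znorm :: "int ^ ('n::finite) \<Rightarrow> real" where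
  "znorm \<xi> = sqrt (\<Sum>i\<in>UNIV. (real_of_int (\<xi> $ i))\<^sup>2)"

definition znorm1 :: "int \<times> (int ^ ('n::finite)) \<Rightarrow> real" where
  "znorm1 z = sqrt ((real_of_int (fst z))\<^sup>2 + (znorm (snd z))\<^sup>2)"

definition is_distr :: "('n::finite) coef \<Rightarrow> bool" where
  "is_distr u \<longleftrightarrow> (\<exists>C k. \<forall>z. norm (u z) \<le> C * (1 + znorm1 z) ^ k)"

definition is_smooth :: "('n::finite) coef \<Rightarrow> bool" where
  "is_smooth u \<longleftrightarrow> (\<forall>k::nat. \<exists>C. \<forall>z. norm (u z) * (1 + znorm1 z) ^ k \<le> C)"

definition smooth_periodic :: "(real \<Rightarrow> complex) \<Rightarrow> bool" where
  "smooth_periodic c \<longleftrightarrow>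
     (\<forall>t. c (t + 2 * pi) = c t) \<and>
     (\<exists>ds :: nat \<Rightarrow> real \<Rightarrow> complex. ds 0 = c \<and>
        (\<forall>k t. (ds k has_vector_derivative ds (Suc k) t) (at t)))"

definition fourier_coeff :: "(real \<Rightarrow> complex) \<Rightarrow> int \<Rightarrow> complex" where
  "fourier_coeff c \<tau> =
     (1 / (2 * pi)) * integral {0..2*pi} (\<lambda>t. exp (- \<i> * of_int \<tau> * of_real t) * c t)"

text \<open>L = D_t + c(t) P(D_x) acting on Fourier coefficients:
  D_t multiplies by tau, P(D_x) multiplies by p(xi), multiplication by c(t) is
  convolution in tau with the Fourier coefficients of c.\<close>
definition Lop :: "(real \<Rightarrow> complex) \<Rightarrow> (int ^ ('n::finite) \<Rightarrow> complex) \<Rightarrow> 'n coef \<Rightarrow> 'n coef" where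
  "Lop c p u = (\<lambda>(\<tau>, \<xi>). of_int \<tau> * u (\<tau>, \<xi>)
      + infsum (\<lambda>\<sigma>. fourier_coeff c (\<tau> - \<sigma>) * p \<xi> * u (\<sigma>, \<xi>)) UNIV)"

fun Lprod :: "(nat \<Rightarrow> real \<Rightarrow> complex) \<Rightarrow> (nat \<Rightarrow> int ^ ('n::finite) \<Rightarrow> complex) \<Rightarrow> nat
               \<Rightarrow> 'n coef \<Rightarrow> 'n coef" where
  "Lprod c p 0 = id"
| "Lprod c p (Suc m) = Lprod c p m \<circ> Lop (c (Suc m)) (p (Suc m))"

definition globally_hypoelliptic :: "(('n::finite) coef \<Rightarrow> 'n coef) \<Rightarrow> bool" where
  "globally_hypoelliptic A \<longleftrightarrow> (\<forall>u. is_distr u \<and> is_smooth (A u) \<longrightarrow> is_smooth u)"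

end

theory Submission
  imports Defs
begin

text \<open>Each factor L_j maps C^\<infinity> into itself: on the Fourier side it is multiplication by
\<tau>, plus convolution in \<tau> with the rapidly decreasing Fourier coefficients of c_j composed with
multiplication by the polynomially bounded symbol p_j. Hence L u_m = L_1 \<dots> L_(k-1) (L_k u_k) is
smooth. If L were globally hypoelliptic, u_m would be smooth, hence so would be
u_(m-1) = L_m u_m, \<dots>, u_k, contradicting the choice of u_k.\<close>

section \<open>Lattice norms\<close>

definition of_int_vec :: "int ^ 'n::finite \<Rightarrow> real ^ 'n" where
  "of_int_vec \<xi> = (\<chi> i. real_of_int (\<xi> $ i))"

lemma znorm_eq_norm: "znorm \<xi> = norm (of_int_vec \<xi>)"
  unfolding znorm_def norm_vec_def L2_set_def of_int_vec_def by simp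

lemma znorm1_eq_norm: "znorm1 (\<tau>, \<xi>) = norm (real_of_int \<tau>, of_int_vec \<xi>)"
  unfolding znorm1_def norm_Pair znorm_eq_norm by simp

lemma znorm_nonneg: "0 \<le> znorm \<xi>"
  by (simp add: znorm_eq_norm)

lemma znorm1_nonneg: "0 \<le> znorm1 z"
  by (cases z) (simp add: znorm1_eq_norm)

lemma znorm_le_znorm1: "znorm \<xi> \<le> znorm1 (\<tau>, \<xi>)"
  unfolding znorm1_eq_norm znorm_eq_norm norm_Pair by (simp add: real_le_rsqrt)

lemma abs_le_znorm1: "\<bar>real_of_int \<tau>\<bar> \<le> znorm1 (\<tau>, \<xi>)"
  unfolding znorm1_eq_norm norm_Pair by (simp add: real_le_rsqrt)

lemma znorm1_shift_le:
  fixes \<xi> :: "int ^ 'n::finite"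
  shows "1 + znorm1 (\<tau>, \<xi>) \<le> (1 + \<bar>real_of_int (\<tau> - \<sigma>)\<bar>) * (1 + znorm1 (\<sigma>, \<xi>))"
proof -
  have "(real_of_int \<tau>, of_int_vec \<xi>) = (real_of_int (\<tau> - \<sigma>), 0) + (real_of_int \<sigma>, of_int_vec \<xi>)"
    by simp
  then have "znorm1 (\<tau>, \<xi>) \<le> norm (real_of_int (\<tau> - \<sigma>), 0 :: real ^ 'n) + znorm1 (\<sigma>, \<xi>)"
    unfolding znorm1_eq_norm by (metis norm_triangle_ineq)
  then have "znorm1 (\<tau>, \<xi>) \<le> \<bar>real_of_int (\<tau> - \<sigma>)\<bar> + znorm1 (\<sigma>, \<xi>)"
    by (simp add: norm_Pair)
  moreover have "0 \<le> \<bar>real_of_int (\<tau> - \<sigma>)\<bar> * znorm1 (\<sigma>, \<xi>)"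
    by (simp add: znorm1_nonneg)
  ultimately show ?thesis
    by (simp add: algebra_simps)
qed

lemma one_le_znorm: "\<xi> \<noteq> 0 \<Longrightarrow> 1 \<le> znorm \<xi>"
proof -
  assume "\<xi> \<noteq> 0"
  then obtain i where "\<xi> $ i \<noteq> 0"
    by (metis vec_eq_iff zero_index)
  then have "1 \<le> \<bar>real_of_int (\<xi> $ i)\<bar>"
    by linarith
  then have "1 \<le> (real_of_int (\<xi> $ i))\<^sup>2"
    by (metis one_le_power power2_abs)
  also have "\<dots> \<le> (\<Sum>j\<in>UNIV. (real_of_int (\<xi> $ j))\<^sup>2)"
    by (rule member_le_sum) auto
  finally show ?thesis
    unfolding znorm_def by (simp add: real_le_rsqrt)
qed

lemma powr_bound_imp_polynomial_bound:
  assumes "\<exists>C>0. \<exists>\<nu>::real. \<forall>\<xi>. \<xi> \<noteq> 0 \<longrightarrow> norm (p \<xi>) \<le> C * znorm \<xi> powr \<nu>"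
  shows "\<exists>Q\<ge>0. \<exists>K. \<forall>\<xi>. norm (p \<xi>) \<le> Q * (1 + znorm \<xi>) ^ K"
proof -
  obtain C \<nu> where C: "C > 0" and p: "\<And>\<xi>. \<xi> \<noteq> 0 \<Longrightarrow> norm (p \<xi>) \<le> C * znorm \<xi> powr \<nu>"
    using assms by blast
  define K where "K = nat \<lceil>\<nu>\<rceil>"
  define Q where "Q = C + norm (p 0)"
  have "0 \<le> Q"
    using C by (simp add: Q_def)
  have "norm (p \<xi>) \<le> Q * (1 + znorm \<xi>) ^ K" for \<xi>
  proof (cases "\<xi> = 0")
    case True
    have "1 \<le> (1 + znorm \<xi>) ^ K"
      using znorm_nonneg[of \<xi>] by simp
    moreover have "norm (p \<xi>) \<le> Q"
      using True C unfolding Q_def by simp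
    ultimately show ?thesis
      using \<open>0 \<le> Q\<close> by (metis mult_left_mono mult_1_right order_trans)
  next
    case False
    have "znorm \<xi> powr \<nu> \<le> znorm \<xi> powr real K"
      using one_le_znorm[OF False] unfolding K_def by (intro powr_mono) linarith+
    also have "\<dots> \<le> (1 + znorm \<xi>) ^ K"
      using one_le_znorm[OF False] by (simp add: powr_realpow power_mono)
    finally have "norm (p \<xi>) \<le> C * (1 + znorm \<xi>) ^ K"
      using p[OF False] C by (meson mult_left_mono less_imp_le order_trans)
    also have "\<dots> \<le> Q * (1 + znorm \<xi>) ^ K"
      using znorm_nonneg[of \<xi>] by (intro mult_right_mono) (auto simp: Q_def)
    finally show ?thesis .
  qed
  with \<open>0 \<le> Q\<close> show ?thesis
    by blast
qed

section \<open>Smoothness on the Fourier side\<close>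

definition rapidly_decreasing :: "(int \<Rightarrow> 'a::real_normed_vector) \<Rightarrow> bool" where
  "rapidly_decreasing a \<longleftrightarrow> (\<forall>N. \<exists>A. \<forall>s. norm (a s) * (1 + \<bar>real_of_int s\<bar>) ^ N \<le> A)"

lemma is_smooth_add:
  assumes "is_smooth u" "is_smooth v"
  shows "is_smooth (\<lambda>z. u z + v z)"
  unfolding is_smooth_def
proof
  fix k
  obtain A B where "\<And>z. norm (u z) * (1 + znorm1 z) ^ k \<le> A" "\<And>z. norm (v z) * (1 + znorm1 z) ^ k \<le> B"
    using assms unfolding is_smooth_def by meson
  moreover have "norm (u z + v z) * (1 + znorm1 z) ^ k
      \<le> norm (u z) * (1 + znorm1 z) ^ k + norm (v z) * (1 + znorm1 z) ^ k" for z
    using znorm1_nonneg[of z] by (simp add: norm_triangle_ineq mult_right_mono flip: distrib_right)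
  ultimately show "\<exists>C. \<forall>z. norm (u z + v z) * (1 + znorm1 z) ^ k \<le> C"
    by (meson add_mono order_trans)
qed

lemma is_smooth_mult_polynomially_bounded:
  assumes u: "is_smooth u" and f: "\<And>z. norm (f z) \<le> Q * (1 + znorm1 z) ^ K"
  shows "is_smooth (\<lambda>z. f z * u z)"
  unfolding is_smooth_def
proof
  fix M
  obtain B where B: "\<And>z. norm (u z) * (1 + znorm1 z) ^ (M + K) \<le> B"
    using u unfolding is_smooth_def by blast
  have "norm (f z * u z) * (1 + znorm1 z) ^ M \<le> \<bar>Q\<bar> * B" for z
  proof -
    have "0 \<le> norm (u z) * (1 + znorm1 z) ^ (M + K)"
      using znorm1_nonneg[of z] by simp
    have "norm (f z * u z) * (1 + znorm1 z) ^ M = norm (f z) * (norm (u z) * (1 + znorm1 z) ^ M)"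
      by (simp add: norm_mult)
    also have "\<dots> \<le> Q * (1 + znorm1 z) ^ K * (norm (u z) * (1 + znorm1 z) ^ M)"
      using znorm1_nonneg[of z] by (intro mult_right_mono f) simp
    also have "\<dots> = Q * (norm (u z) * (1 + znorm1 z) ^ (M + K))"
      by (simp add: power_add algebra_simps)
    also have "\<dots> \<le> \<bar>Q\<bar> * (norm (u z) * (1 + znorm1 z) ^ (M + K))"
      using \<open>0 \<le> norm (u z) * _\<close> by (intro mult_right_mono) auto
    also have "\<dots> \<le> \<bar>Q\<bar> * B"
      by (intro mult_left_mono B) simp
    finally show ?thesis .
  qed
  then show "\<exists>C. \<forall>z. norm (f z * u z) * (1 + znorm1 z) ^ M \<le> C"
    by blast
qed

lemma summable_on_inverse_square_int: "(\<lambda>s::int. 1 / (1 + \<bar>real_of_int s\<bar>)\<^sup>2) summable_on UNIV"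
proof -
  have "summable (\<lambda>n::nat. inverse (real n) ^ 2)"
    using inverse_power_summable[of 2] by (simp add: power_inverse)
  then have "summable (\<lambda>n::nat. 1 / (1 + real n)\<^sup>2)"
    by (subst (asm) summable_Suc_iff[symmetric]) (simp add: power_inverse divide_inverse add.commute)
  then have nat: "(\<lambda>n::nat. 1 / (1 + real n)\<^sup>2) summable_on UNIV"
    by (subst summable_on_UNIV_nonneg_real_iff) auto
  have "(\<lambda>s::int. 1 / (1 + \<bar>real_of_int s\<bar>)\<^sup>2) summable_on range int"
    using nat by (subst summable_on_reindex) (auto simp: o_def inj_on_def)
  moreover have "(\<lambda>s::int. 1 / (1 + \<bar>real_of_int s\<bar>)\<^sup>2) summable_on range (\<lambda>n. - int n)"
    using nat by (subst summable_on_reindex) (auto simp: o_def inj_on_def)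
  moreover have "range int \<union> range (\<lambda>n. - int n) = UNIV"
  proof -
    have "s = int (nat s) \<or> s = - int (nat (- s))" for s :: int
      by linarith
    then show ?thesis
      by blast
  qed
  ultimately show ?thesis
    using summable_on_union by metis
qed

text \<open>The weight at (\<tau>, \<xi>) is moved to (\<sigma>, \<xi>) at the cost of a power of 1 + |\<tau> - \<sigma>|,
which the decay of a absorbs; its two extra powers of decay make the sum over \<sigma> converge.\<close>

lemma convolution_term_weighted_le:
  fixes a :: "int \<Rightarrow> complex" and v :: "('n::finite) coef"
  assumes A: "\<And>s. norm (a s) * (1 + \<bar>real_of_int s\<bar>) ^ (M + 2) \<le> A"
    and B: "\<And>z. norm (v z) * (1 + znorm1 z) ^ M \<le> B"
  shows "norm (a (\<tau> - \<sigma>) * v (\<sigma>, \<xi>)) * (1 + znorm1 (\<tau>, \<xi>)) ^ M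
    \<le> A * B * (1 / (1 + \<bar>real_of_int (\<tau> - \<sigma>)\<bar>)\<^sup>2)"
proof -
  define D where "D = 1 + \<bar>real_of_int (\<tau> - \<sigma>)\<bar>"
  have "D \<ge> 1"
    by (simp add: D_def)
  have aD: "norm (a (\<tau> - \<sigma>)) * D ^ M \<le> A / D\<^sup>2"
  proof -
    have "norm (a (\<tau> - \<sigma>)) * D ^ M * D\<^sup>2 \<le> A"
      using A[of "\<tau> - \<sigma>"] unfolding D_def[symmetric] by (simp only: power_add mult.assoc)
    then show ?thesis
      using \<open>D \<ge> 1\<close> by (simp add: pos_le_divide_eq)
  qed
  have "0 \<le> A / D\<^sup>2"
    using \<open>D \<ge> 1\<close> by (intro order_trans[OF _ aD]) simp
  have "norm (a (\<tau> - \<sigma>) * v (\<sigma>, \<xi>)) * (1 + znorm1 (\<tau>, \<xi>)) ^ M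
      \<le> norm (a (\<tau> - \<sigma>)) * norm (v (\<sigma>, \<xi>)) * (D * (1 + znorm1 (\<sigma>, \<xi>))) ^ M"
    unfolding norm_mult D_def using znorm1_nonneg[of "(\<tau>, \<xi>)"]
    by (intro mult_left_mono power_mono znorm1_shift_le) simp_all
  also have "\<dots> = (norm (a (\<tau> - \<sigma>)) * D ^ M) * (norm (v (\<sigma>, \<xi>)) * (1 + znorm1 (\<sigma>, \<xi>)) ^ M)"
    by (simp only: power_mult_distrib mult_ac)
  also have "\<dots> \<le> A / D\<^sup>2 * B"
    using znorm1_nonneg[of "(\<sigma>, \<xi>)"] \<open>0 \<le> A / D\<^sup>2\<close>
    by (intro mult_mono aD B) simp_all
  finally show ?thesis
    by (simp add: D_def)
qed

lemma is_smooth_convolution: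
  fixes a :: "int \<Rightarrow> complex" and v :: "('n::finite) coef"
  assumes a: "rapidly_decreasing a" and v: "is_smooth v"
  shows "is_smooth (\<lambda>(\<tau>, \<xi>). \<Sum>\<^sub>\<infinity>\<sigma>. a (\<tau> - \<sigma>) * v (\<sigma>, \<xi>))"
  unfolding is_smooth_def
proof
  fix M
  define g where "g = (\<lambda>s::int. 1 / (1 + \<bar>real_of_int s\<bar>)\<^sup>2)"
  obtain A where A: "\<And>s. norm (a s) * (1 + \<bar>real_of_int s\<bar>) ^ (M + 2) \<le> A"
    using a unfolding rapidly_decreasing_def by blast
  obtain B where B: "\<And>z. norm (v z) * (1 + znorm1 z) ^ M \<le> B"
    using v unfolding is_smooth_def by blast
  have "norm (\<Sum>\<^sub>\<infinity>\<sigma>. a (\<tau> - \<sigma>) * v (\<sigma>, \<xi>)) * (1 + znorm1 (\<tau>, \<xi>)) ^ M \<le> A * B * infsum g UNIV"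
    for \<tau> \<xi>
  proof -
    define W where "W = (1 + znorm1 (\<tau>, \<xi>)) ^ M"
    have "W > 0"
      using znorm1_nonneg[of "(\<tau>, \<xi>)"] by (simp add: W_def)
    define h where "h = (\<lambda>\<sigma>. A * B / W * g (\<tau> - \<sigma>))"
    have shift: "bij_betw (\<lambda>\<sigma>. \<tau> - \<sigma>) UNIV UNIV"
      by (rule bij_betw_byWitness[where f' = "\<lambda>s. \<tau> - s"]) auto
    have "g summable_on UNIV"
      unfolding g_def by (rule summable_on_inverse_square_int)
    then have "(\<lambda>\<sigma>. g (\<tau> - \<sigma>)) summable_on UNIV"
      by (rule summable_on_reindex_bij_betw[OF shift, THEN iffD2])
    then have h_sum: "(h has_sum (A * B / W * infsum g UNIV)) UNIV"
      unfolding h_def infsum_reindex_bij_betw[OF shift, of g, symmetric]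
      by (intro has_sum_cmult_right has_sum_infsum)
    have bound: "norm (a (\<tau> - \<sigma>) * v (\<sigma>, \<xi>)) \<le> h \<sigma>" for \<sigma>
      using convolution_term_weighted_le[OF A B, of \<tau> \<sigma> \<xi>] \<open>W > 0\<close>
      by (simp add: h_def g_def W_def pos_le_divide_eq)
    have "(\<lambda>\<sigma>. norm (a (\<tau> - \<sigma>) * v (\<sigma>, \<xi>))) summable_on UNIV"
    proof (rule summable_on_comparison_test)
      show "h summable_on UNIV"
        using h_sum unfolding summable_on_def by blast
    qed (use bound in auto)
    then have "(\<lambda>\<sigma>. a (\<tau> - \<sigma>) * v (\<sigma>, \<xi>)) summable_on UNIV"
      by (rule abs_summable_summable)
    then have "norm (\<Sum>\<^sub>\<infinity>\<sigma>. a (\<tau> - \<sigma>) * v (\<sigma>, \<xi>)) \<le> A * B / W * infsum g UNIV"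
      using bound by (intro norm_infsum_le[OF has_sum_infsum h_sum])
    then show ?thesis
      using \<open>W > 0\<close> by (simp add: W_def pos_le_divide_eq mult.commute mult.left_commute)
  qed
  then show "\<exists>C. \<forall>z. norm ((\<lambda>(\<tau>, \<xi>). \<Sum>\<^sub>\<infinity>\<sigma>. a (\<tau> - \<sigma>) * v (\<sigma>, \<xi>)) z) * (1 + znorm1 z) ^ M \<le> C"
    by auto
qed

section \<open>Fourier coefficients of smooth periodic functions\<close>

lemma fourier_coeff_deriv:
  assumes periodic: "\<And>t. c (t + 2 * pi) = c t"
    and deriv: "\<And>t. (c has_vector_derivative d t) (at t)"
    and cont: "continuous_on UNIV d"
  shows "fourier_coeff d \<tau> = \<i> * of_int \<tau> * fourier_coeff c \<tau>"
proof -
  define E where "E = (\<lambda>t::real. exp (- \<i> * of_int \<tau> * of_real t))"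
  have E_deriv: "(E has_vector_derivative - \<i> * of_int \<tau> * E t) (at t within S)" for t S
  proof -
    have "((\<lambda>z. exp (- \<i> * of_int \<tau> * z)) has_field_derivative - \<i> * of_int \<tau> * E t) (at (of_real t))"
      unfolding E_def by (auto intro!: derivative_eq_intros simp: algebra_simps)
    then show ?thesis
      unfolding E_def by (rule has_vector_derivative_real_field)
  qed
  have "continuous_on UNIV c"
    by (rule continuous_on_vector_derivative, rule has_vector_derivative_at_within, rule deriv)
  then have Ec_int: "(\<lambda>t. E t * c t) integrable_on {0..2*pi}"
    unfolding E_def by (intro integrable_continuous_real continuous_intros) (auto intro: continuous_on_subset)
  have "((\<lambda>t. E t * c t) has_vector_derivative (- \<i> * of_int \<tau> * E t * c t + E t * d t))
      (at t within {0..2*pi})" for t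
    by (rule derivative_eq_intros E_deriv has_vector_derivative_at_within[OF deriv] refl)+
      (simp add: algebra_simps)
  from fundamental_theorem_of_calculus[OF _ this]
  have "((\<lambda>t. - \<i> * of_int \<tau> * (E t * c t) + E t * d t) has_integral
      E (2*pi) * c (2*pi) - E 0 * c 0) {0..2*pi}"
    by (simp add: mult.assoc)
  moreover have "E (2*pi) = 1"
    unfolding E_def using exp_eq_1[of "- \<i> * of_int \<tau> * of_real (2*pi)"]
    by (simp, intro exI[of _ "- \<tau>"], simp)
  ultimately have "((\<lambda>t. - \<i> * of_int \<tau> * (E t * c t) + E t * d t) has_integral 0) {0..2*pi}"
    using periodic[of 0] by (simp add: E_def)
  from has_integral_diff[OF this has_integral_mult_right[OF integrable_integral[OF Ec_int],
        of "- \<i> * of_int \<tau>"]]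
  have "((\<lambda>t. E t * d t) has_integral \<i> * of_int \<tau> * integral {0..2*pi} (\<lambda>t. E t * c t)) {0..2*pi}"
    by simp
  then show ?thesis
    unfolding fourier_coeff_def E_def by (simp add: integral_unique)
qed

lemma fourier_coeff_bounded:
  assumes "continuous_on UNIV d"
  shows "\<exists>M. \<forall>\<tau>. norm (fourier_coeff d \<tau>) \<le> M"
proof -
  obtain B where B: "\<And>t. t \<in> {0..2*pi} \<Longrightarrow> norm (d t) \<le> B"
    using continuous_on_compact_bound[OF compact_Icc continuous_on_subset[OF assms]] by blast
  have "norm (fourier_coeff d \<tau>) \<le> B" for \<tau>
  proof -
    have "norm (integral {0..2*pi} (\<lambda>t. exp (- \<i> * of_int \<tau> * of_real t) * d t)) \<le> B * (2*pi - 0)"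
    proof (rule integral_bound)
      show "continuous_on {0..2*pi} (\<lambda>t. exp (- \<i> * of_int \<tau> * of_real t) * d t)"
        by (intro continuous_intros continuous_on_subset[OF assms]) auto
    qed (auto simp: norm_mult norm_exp_eq_Re B)
    then show ?thesis
      unfolding fourier_coeff_def by (simp add: norm_mult norm_divide pos_divide_le_eq mult.commute)
  qed
  then show ?thesis
    by blast
qed

lemma periodic_vector_derivative:
  fixes f f' :: "real \<Rightarrow> 'a::real_normed_vector"
  assumes periodic: "\<And>t. f (t + T) = f t" and deriv: "\<And>t. (f has_vector_derivative f' t) (at t)"
  shows "f' (t + T) = f' t"
proof -
  have "((f \<circ> (\<lambda>t. t + T)) has_vector_derivative (1::real) *\<^sub>R f' (t + T)) (at t)"
    by (rule vector_diff_chain_at) (auto intro!: derivative_eq_intros deriv)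
  moreover have "f \<circ> (\<lambda>t. t + T) = f"
    using periodic by (auto simp: o_def)
  ultimately have "(f has_vector_derivative f' (t + T)) (at t)"
    by simp
  then show ?thesis
    using deriv vector_derivative_unique_at by metis
qed

lemma one_plus_power_le:
  fixes x :: real
  assumes "0 \<le> x"
  shows "(1 + x) ^ N \<le> 2 ^ N * (1 + x ^ N)"
proof (cases "x \<le> 1")
  case True
  then have "(1 + x) ^ N \<le> 2 ^ N"
    using assms by (intro power_mono) auto
  also have "\<dots> \<le> 2 ^ N * (1 + x ^ N)"
    using assms by simp
  finally show ?thesis .
next
  case False
  then have "(1 + x) ^ N \<le> (2 * x) ^ N"
    using assms by (intro power_mono) auto
  also have "\<dots> \<le> 2 ^ N * (1 + x ^ N)"
    by (simp add: power_mult_distrib)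
  finally show ?thesis .
qed

lemma rapidly_decreasing_fourier_coeff:
  assumes "smooth_periodic c"
  shows "rapidly_decreasing (fourier_coeff c)"
  unfolding rapidly_decreasing_def
proof
  fix N
  obtain ds where periodic: "\<And>t. c (t + 2 * pi) = c t" and "ds 0 = c"
    and deriv: "\<And>k t. (ds k has_vector_derivative ds (Suc k) t) (at t)"
    using assms unfolding smooth_periodic_def by blast
  have cont: "continuous_on UNIV (ds k)" for k
    by (rule continuous_on_vector_derivative, rule has_vector_derivative_at_within, rule deriv)
  have periodic_ds: "ds k (t + 2 * pi) = ds k t" for k t
  proof (induction k arbitrary: t)
    case 0
    then show ?case
      using periodic \<open>ds 0 = c\<close> by simp
  next
    case (Suc k)
    show ?case
      by (rule periodic_vector_derivative[OF Suc.IH deriv])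
  qed
  have coeff_ds: "fourier_coeff (ds k) \<tau> = (\<i> * of_int \<tau>) ^ k * fourier_coeff c \<tau>" for k \<tau>
  proof (induction k)
    case 0
    then show ?case
      using \<open>ds 0 = c\<close> by simp
  next
    case (Suc k)
    then show ?case
      using fourier_coeff_deriv[OF periodic_ds deriv cont] by simp
  qed
  obtain M0 where M0: "\<And>\<tau>. norm (fourier_coeff c \<tau>) \<le> M0"
    using fourier_coeff_bounded[OF cont[of 0]] \<open>ds 0 = c\<close> by auto
  obtain MN where MN: "\<And>\<tau>. norm (fourier_coeff (ds N) \<tau>) \<le> MN"
    using fourier_coeff_bounded[OF cont[of N]] by auto
  have "norm (fourier_coeff c s) * (1 + \<bar>real_of_int s\<bar>) ^ N \<le> 2 ^ N * (M0 + MN)" for s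
  proof -
    have "norm (fourier_coeff c s) * (1 + \<bar>real_of_int s\<bar>) ^ N
        \<le> norm (fourier_coeff c s) * (2 ^ N * (1 + \<bar>real_of_int s\<bar> ^ N))"
      by (intro mult_left_mono one_plus_power_le) auto
    also have "\<dots> = 2 ^ N * (norm (fourier_coeff c s) + norm (fourier_coeff (ds N) s))"
      by (simp add: coeff_ds norm_mult norm_power algebra_simps)
    also have "\<dots> \<le> 2 ^ N * (M0 + MN)"
      by (intro mult_left_mono add_mono M0 MN) auto
    finally show ?thesis .
  qed
  then show "\<exists>A. \<forall>s. norm (fourier_coeff c s) * (1 + \<bar>real_of_int s\<bar>) ^ N \<le> A"
    by blast
qed

section \<open>The operators L_j and their products\<close>

lemma is_smooth_Lop:
  assumes c: "smooth_periodic c" and Q: "0 \<le> Q" and p: "\<And>\<xi>. norm (p \<xi>) \<le> Q * (1 + znorm \<xi>) ^ K"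
    and u: "is_smooth u"
  shows "is_smooth (Lop c p u)"
proof -
  have tau: "is_smooth (\<lambda>z. of_int (fst z) * u z)"
  proof (rule is_smooth_mult_polynomially_bounded[OF u, where Q = 1 and K = 1])
    show "norm (of_int (fst z) :: complex) \<le> 1 * (1 + znorm1 z) ^ 1" for z
      using abs_le_znorm1[of "fst z" "snd z"] by simp
  qed
  have pu: "is_smooth (\<lambda>z. p (snd z) * u z)"
  proof (rule is_smooth_mult_polynomially_bounded[OF u, where Q = Q and K = K])
    show "norm (p (snd z)) \<le> Q * (1 + znorm1 z) ^ K" for z
    proof -
      have "(1 + znorm (snd z)) ^ K \<le> (1 + znorm1 z) ^ K"
        using znorm_le_znorm1[of "snd z" "fst z"] znorm_nonneg[of "snd z"] by (intro power_mono) auto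
      then show ?thesis
        using p[of "snd z"] Q by (meson mult_left_mono order_trans)
    qed
  qed
  have conv: "is_smooth (\<lambda>(\<tau>, \<xi>). \<Sum>\<^sub>\<infinity>\<sigma>. fourier_coeff c (\<tau> - \<sigma>) * (p \<xi> * u (\<sigma>, \<xi>)))"
    using is_smooth_convolution[OF rapidly_decreasing_fourier_coeff[OF c] pu] by simp
  have "Lop c p u = (\<lambda>z. of_int (fst z) * u z +
      (\<lambda>(\<tau>, \<xi>). \<Sum>\<^sub>\<infinity>\<sigma>. fourier_coeff c (\<tau> - \<sigma>) * (p \<xi> * u (\<sigma>, \<xi>))) z)"
    unfolding Lop_def by (auto simp: mult.assoc)
  then show ?thesis
    using is_smooth_add[OF tau conv] by simp
qed

lemma Lprod_preserves:
  assumes "\<And>j v. j \<in> {1..n} \<Longrightarrow> P v \<Longrightarrow> P (Lop (c j) (p j) v)" and "P v"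
  shows "P (Lprod c p n v)"
  using assms by (induction n arbitrary: v) auto

lemma Lprod_telescope:
  assumes "\<forall>j<n. u (k + j) = Lop (c (k + j + 1)) (p (k + j + 1)) (u (k + j + 1))"
  shows "Lprod c p (k + n) (u (k + n)) = Lprod c p k (u k)"
  using assms by (induction n) auto

lemma chain_preserves_backwards:
  fixes n :: nat
  assumes "\<forall>j<n. u (k + j) = F (k + j + 1) (u (k + j + 1))"
    and "\<And>j v. j \<in> {k+1..k+n} \<Longrightarrow> P v \<Longrightarrow> P (F j v)" and "P (u (k + n))"
  shows "P (u k)"
  using assms
proof (induction n arbitrary: k)
  case 0
  then show ?case
    by simp
next
  case (Suc n)
  have "P (u (k + 1))"
    using Suc.prems by (intro Suc.IH[of "k + 1"]) auto
  moreover have "u k = F (k + 1) (u (k + 1))"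
    using Suc.prems(1)[rule_format, of 0] by simp
  ultimately show ?case
    using Suc.prems(2)[of "k + 1"] by simp
qed

theorem theorem10:
  fixes c :: "nat \<Rightarrow> real \<Rightarrow> complex"
    and p :: "nat \<Rightarrow> int ^ 'n \<Rightarrow> complex"
    and u :: "nat \<Rightarrow> 'n coef"
    and m k :: nat
  assumes "m \<ge> 1"
    and c_smooth: "\<forall>j\<in>{1..m}. smooth_periodic (c j)"
    and p_bound: "\<forall>j\<in>{1..m}. \<exists>C>0. \<exists>\<nu>::real. \<forall>\<xi>. \<xi> \<noteq> 0 \<longrightarrow> norm (p j \<xi>) \<le> C * znorm \<xi> powr \<nu>"
    and Im_bound: "\<forall>j\<in>{1..m}. \<exists>\<eta>>0. \<forall>t \<xi>. Im (c j t * p j \<xi>) \<ge> - \<eta>"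
    and k: "k \<in> {1..m}"
    and sing: "is_distr (u k)" "\<not> is_smooth (u k)" "is_smooth (Lop (c k) (p k) (u k))"
    and distrs: "\<forall>i\<in>{k+1..m}. is_distr (u i)"
    and chain: "\<forall>j<m-k. u (k+j) = Lop (c (k+j+1)) (p (k+j+1)) (u (k+j+1))"
  shows "\<not> globally_hypoelliptic (Lprod c p m)"
proof
  assume hypoelliptic: "globally_hypoelliptic (Lprod c p m)"
  have L_smooth: "is_smooth (Lop (c j) (p j) v)" if "j \<in> {1..m}" "is_smooth v" for j v
    using powr_bound_imp_polynomial_bound[of "p j"] p_bound c_smooth is_smooth_Lop that by metis
  obtain k' where "k = Suc k'"
    using k by (cases k) auto
  have "Lprod c p m (u m) = Lprod c p k (u k)"
    using Lprod_telescope[OF chain] k by simp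
  also have "\<dots> = Lprod c p k' (Lop (c k) (p k) (u k))"
    using \<open>k = Suc k'\<close> by simp
  finally have "is_smooth (Lprod c p m (u m))"
    using Lprod_preserves[of k' is_smooth, OF _ sing(3)] L_smooth \<open>k = Suc k'\<close> k by simp
  moreover have "is_distr (u m)"
    using sing(1) distrs k by (cases "k = m") auto
  ultimately have "is_smooth (u m)"
    using hypoelliptic unfolding globally_hypoelliptic_def by blast
  then have "is_smooth (u k)"
    using chain_preserves_backwards[where F = "\<lambda>j. Lop (c j) (p j)" and P = is_smooth, OF chain]
      L_smooth k by simp
  with sing(2) show False ..
qed

end
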